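(* Fix a positive integer $q$ and $\epsilon\in(0,1)$. Let $P_n$ be a random many-to-one school choice problem with $n$ schools of quota $q$ and $nq$ students, and let $I_0\subseteq I$, $S_1\subseteq S$ be fixed subsets with $|I_0|\ge\epsilon nq$ and $|S_1|\ge\epsilon n$. The probability of the event that the students in $I_0$ together make at least $n\sqrt{\log n}$ applications during DA and no student in $I_0$ ever applies to a school in $S_1$ is at most $(1-\epsilon)^{n\sqrt{\log n}}$.
   Context: A random many-to-one school choice problem $P_n$ with quota $q$: a set $S$ of $n$ schools, each with quota $q$, and a set $I$ of $nq$ students; each student's strict preference over $S$ and each school's strict priority over $I$ are uniformly random linear orders, all mutually independent. Student-proposing deferred acceptance (DA): in each round every student not tentatively held applies to her most preferred school that has not yet rejected her; each school tentatively holds its $q$ highest-priority applicants and rejects the rest; stop when a round has no new rejection. Student $i$ applies to school $s$ if at some round she proposes to $s$; the number of applications a student makes is the number of schools she applies to. *)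

theory Defs
  imports "HOL-Probability.Probability" "HOL-Combinatorics.Multiset_Permutations"
begin

text \<open>Students are 0..<n*q, schools are 0..<n. A profile is a pair (pref, prio):
  pref i is student i's preference list over schools (most preferred first),
  prio s is school s's priority list over students (highest priority first).\<close>

type_synonym profile = "(nat \<Rightarrow> nat list) \<times> (nat \<Rightarrow> nat list)"

definition profiles :: "nat \<Rightarrow> nat \<Rightarrow> profile set" where
  "profiles n q = (PiE {..<n*q} (\<lambda>_. permutations_of_set {..<n}))
                  \<times> (PiE {..<n} (\<lambda>_. permutations_of_set {..<n*q}))"

definition random_problem :: "nat \<Rightarrow> nat \<Rightarrow> profile pmf" where
  "random_problem n q = pmf_of_set (profiles n q)"

definition prec :: "'a list \<Rightarrow> 'a \<Rightarrow> 'a \<Rightarrow> bool" where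
  "prec xs a b \<longleftrightarrow> (\<exists>k l. k < l \<and> l < length xs \<and> xs ! k = a \<and> xs ! l = b)"

text \<open>DA state: k i = number of rejections student i has received so far;
  student i currently applies to (or is held by) school pref i ! k i.\<close>
definition applicants :: "nat \<Rightarrow> nat \<Rightarrow> profile \<Rightarrow> (nat \<Rightarrow> nat) \<Rightarrow> nat \<Rightarrow> nat set" where
  "applicants n q P k s = {i \<in> {..<n*q}. k i < n \<and> fst P i ! k i = s}"

definition rejected :: "nat \<Rightarrow> nat \<Rightarrow> profile \<Rightarrow> (nat \<Rightarrow> nat) \<Rightarrow> nat \<Rightarrow> bool" where
  "rejected n q P k i \<longleftrightarrow> i < n*q \<and> k i < n \<and>
     (let s = fst P i ! k i in
        card {j \<in> applicants n q P k s. prec (snd P s) j i} \<ge> q)"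

definition da_round :: "nat \<Rightarrow> nat \<Rightarrow> profile \<Rightarrow> (nat \<Rightarrow> nat) \<Rightarrow> (nat \<Rightarrow> nat)" where
  "da_round n q P k = (\<lambda>i. if rejected n q P k i then Suc (k i) else k i)"

definition da_state :: "nat \<Rightarrow> nat \<Rightarrow> profile \<Rightarrow> nat \<Rightarrow> (nat \<Rightarrow> nat)" where
  "da_state n q P t = (da_round n q P ^^ t) (\<lambda>_. 0)"

definition applied :: "nat \<Rightarrow> nat \<Rightarrow> profile \<Rightarrow> nat \<Rightarrow> nat set" where
  "applied n q P i = {fst P i ! j | j t. j \<le> da_state n q P t i \<and> j < n}"

definition num_applications :: "nat \<Rightarrow> nat \<Rightarrow> profile \<Rightarrow> nat \<Rightarrow> nat" where
  "num_applications n q P i = card (applied n q P i)"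

end

theory Submission
  imports Defs
begin

text \<open>Let B be the set of profiles in which every student of I0 ranks all schools of S1 last.
  DA only reads the prefixes of the preference lists that it reaches, so the profiles sharing the
  priorities of P and these prefixes form the class (cylinder) of P in a partition of the
  profile space.
  If P lies in the event, every reached prefix of a student in I0 avoids S1; conditioned on such a
  prefix of length m, the probability of ranking S1 last grows by at least the factor
  (1 - \<epsilon>)^(-m), because at least an \<epsilon>-fraction of the schools lies in S1. Hence
  B is at least (1 - \<epsilon>)^(-n sqrt(log n)) times denser in every class meeting the event
  than overall, and summing over the disjoint classes bounds the probability of the event.\<close>

lemma da_state_Suc: "da_state n q P (Suc t) = da_round n q P (da_state n q P t)"
  by (simp add: da_state_def)

lemma da_state_le: "da_state n q P t i \<le> n"
  by (induction t) (auto simp: da_state_def da_round_def rejected_def)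

definition examined :: "nat \<Rightarrow> nat \<Rightarrow> profile \<Rightarrow> nat \<Rightarrow> nat" where
  "examined n q P i = min (Suc (Max (range (\<lambda>t. da_state n q P t i)))) n"

lemma less_examined_iff: "j < examined n q P i \<longleftrightarrow> j < n \<and> (\<exists>t. j \<le> da_state n q P t i)"
proof -
  let ?R = "range (\<lambda>t. da_state n q P t i)"
  have fin: "finite ?R"
    by (rule finite_subset[of _ "{..n}"]) (auto simp: da_state_le)
  obtain t0 where t0: "Max ?R = da_state n q P t0 i"
    using Max_in[OF fin] by auto
  have "j < Suc (Max ?R) \<longleftrightarrow> (\<exists>t. j \<le> da_state n q P t i)"
    using Max_ge[OF fin] t0 by (metis less_Suc_eq_le order_trans rangeI)
  then show ?thesis by (auto simp: examined_def)
qed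

lemma examined_le: "examined n q P i \<le> n"
  by (simp add: examined_def)

lemma pref_in_permutations:
  "P \<in> profiles n q \<Longrightarrow> i < n*q \<Longrightarrow> fst P i \<in> permutations_of_set {..<n}"
  by (auto simp: profiles_def)

lemma applied_eq_set_take:
  assumes "P \<in> profiles n q" "i < n*q"
  shows "applied n q P i = set (take (examined n q P i) (fst P i))"
proof -
  have len: "length (fst P i) = n"
    using length_finite_permutations_of_set[OF pref_in_permutations[OF assms]] by simp
  have "applied n q P i = {fst P i ! j | j. j < examined n q P i}"
    by (auto simp: applied_def less_examined_iff)
  also have "\<dots> = set (take (examined n q P i) (fst P i))"
    using len examined_le[of n q P i] by (auto simp: set_conv_nth) (metis nth_take)
  finally show ?thesis .
qed

lemma num_applications_eq_examined:
  assumes "P \<in> profiles n q" "i < n*q"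
  shows "num_applications n q P i = examined n q P i"
proof -
  have "fst P i \<in> permutations_of_set {..<n}" by (rule pref_in_permutations[OF assms])
  then have "distinct (fst P i)" "length (fst P i) = n"
    by (auto dest: permutations_of_setD length_finite_permutations_of_set)
  then show ?thesis
    using applied_eq_set_take[OF assms] examined_le[of n q P i]
    by (simp add: num_applications_def distinct_card)
qed

lemma da_state_eq_if_prefixes_agree:
  assumes "snd P' = snd P"
    and "\<forall>i<n*q. take (examined n q P i) (fst P' i) = take (examined n q P i) (fst P i)"
  shows "da_state n q P' t = da_state n q P t"
proof (induction t)
  case 0
  then show ?case by (simp add: da_state_def)
next
  case (Suc t)
  define k where "k = da_state n q P t"
  have same_school: "fst P' i ! k i = fst P i ! k i" if "i < n*q" "k i < n" for i
  proof -
    have "k i < examined n q P i" using that by (auto simp: k_def less_examined_iff)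
    then show ?thesis using assms(2) that by (metis nth_take)
  qed
  then have "applicants n q P' k = applicants n q P k"
    by (auto simp: applicants_def)
  then have "rejected n q P' k = rejected n q P k"
    using same_school assms(1) by (auto simp: rejected_def Let_def fun_eq_iff)
  then show ?case using Suc by (simp add: da_state_Suc da_round_def k_def)
qed

lemma examined_eq_if_prefixes_agree:
  assumes "snd P' = snd P"
    and "\<forall>i<n*q. take (examined n q P i) (fst P' i) = take (examined n q P i) (fst P i)"
  shows "examined n q P' = examined n q P"
  using da_state_eq_if_prefixes_agree[OF assms] by (simp add: examined_def fun_eq_iff)

lemma drop_in_permutations_of_set:
  assumes "xs \<in> permutations_of_set U"
  shows "drop m xs \<in> permutations_of_set (U - set (take m xs))"
proof -
  have "distinct (take m xs @ drop m xs)" "set (take m xs @ drop m xs) = U"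
    using assms by (simp_all add: permutations_of_setD)
  then show ?thesis by (auto simp del: append_take_drop_id)
qed

lemma card_permutations_with_prefix:
  assumes "finite U" "distinct p" "set p \<subseteq> U"
  shows "card {xs \<in> permutations_of_set U. take (length p) xs = p} = fact (card U - length p)"
proof -
  have "{xs \<in> permutations_of_set U. take (length p) xs = p} = (@) p ` permutations_of_set (U - set p)"
  proof (intro equalityI subsetI)
    fix xs assume xs: "xs \<in> {xs \<in> permutations_of_set U. take (length p) xs = p}"
    then have "xs = p @ drop (length p) xs" by (metis (mono_tags) append_take_drop_id mem_Collect_eq)
    moreover have "drop (length p) xs \<in> permutations_of_set (U - set p)"
      using drop_in_permutations_of_set[of xs U "length p"] xs by simp
    ultimately show "xs \<in> (@) p ` permutations_of_set (U - set p)" by blast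
  qed (use assms in \<open>auto simp: permutations_of_set_def\<close>)
  moreover have "inj_on ((@) p) (permutations_of_set (U - set p))" by (simp add: inj_on_def)
  ultimately show ?thesis
    using assms by (simp add: card_image card_Diff_subset distinct_card)
qed

definition last_block_permutations :: "'a set \<Rightarrow> 'a set \<Rightarrow> 'a list set" where
  "last_block_permutations U S =
     (\<lambda>(xs, ys). xs @ ys) ` (permutations_of_set (U - S) \<times> permutations_of_set S)"

lemma last_block_permutations_subset:
  "S \<subseteq> U \<Longrightarrow> last_block_permutations U S \<subseteq> permutations_of_set U"
  by (auto simp: last_block_permutations_def permutations_of_set_def)

lemma card_last_block_permutations:
  assumes "finite U" "S \<subseteq> U"
  shows "card (last_block_permutations U S) = fact (card U - card S) * fact (card S)"
proof -
  have "inj_on (\<lambda>(xs, ys). xs @ ys) (permutations_of_set (U - S) \<times> permutations_of_set S)"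
    by (auto simp: inj_on_def dest!: length_finite_permutations_of_set)
  moreover have "finite S" using assms finite_subset by blast
  ultimately show ?thesis
    using assms by (simp add: last_block_permutations_def card_image card_cartesian_product
        card_Diff_subset)
qed

lemma card_prefix_last_block_ge:
  assumes "finite U" "S \<subseteq> U" "distinct p" "set p \<subseteq> U - S"
  shows "fact (card U - card S - length p) * fact (card S)
           \<le> card ({xs \<in> permutations_of_set U. take (length p) xs = p} \<inter> last_block_permutations U S)"
proof -
  let ?T = "permutations_of_set (U - S - set p) \<times> permutations_of_set S"
  let ?f = "\<lambda>(ys, zs). (p @ ys) @ zs"
  have "finite S" using assms finite_subset by blast
  have "?f ` ?T \<subseteq> {xs \<in> permutations_of_set U. take (length p) xs = p} \<inter> last_block_permutations U S"
  proof
    fix xs assume "xs \<in> ?f ` ?T"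
    then obtain ys zs where xs: "xs = (p @ ys) @ zs"
      and ys: "ys \<in> permutations_of_set (U - S - set p)" and zs: "zs \<in> permutations_of_set S"
      by auto
    have "p @ ys \<in> permutations_of_set (U - S)"
      using ys assms by (auto simp: permutations_of_set_def)
    then have "xs \<in> last_block_permutations U S"
      using xs zs unfolding last_block_permutations_def by blast
    then show "xs \<in> {xs \<in> permutations_of_set U. take (length p) xs = p} \<inter> last_block_permutations U S"
      using xs last_block_permutations_subset[OF assms(2)] by auto
  qed
  moreover have "inj_on ?f ?T"
  proof (rule inj_onI, clarify)
    fix ys zs ys' zs'
    assume "ys \<in> permutations_of_set (U - S - set p)" "ys' \<in> permutations_of_set (U - S - set p)"
      and eq: "(p @ ys) @ zs = (p @ ys') @ zs'"
    then have "length ys = length ys'" by (simp add: length_finite_permutations_of_set)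
    then show "ys = ys' \<and> zs = zs'" using eq by simp
  qed
  ultimately have "card ?T \<le> card ({xs \<in> permutations_of_set U. take (length p) xs = p}
                                    \<inter> last_block_permutations U S)"
    using card_mono[of _ "?f ` ?T"] card_image[of ?f ?T] by simp
  moreover have "card (U - S - set p) = card U - card S - length p"
    using assms \<open>finite S\<close> by (simp add: card_Diff_subset distinct_card)
  moreover have "card ?T = fact (card (U - S - set p)) * fact (card S)"
    using assms(1) \<open>finite S\<close> by (simp add: card_cartesian_product)
  ultimately show ?thesis by simp
qed

lemma fact_diff_mult_fact_diff_le:
  fixes c :: real
  assumes "s \<le> N" "a \<le> N - s" "real (N - s) \<le> c * real N" "0 \<le> c" "c \<le> 1"
  shows "fact (N - a) * fact (N - s) \<le> c ^ a * fact (N - s - a) * fact N"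
  using assms(2)
proof (induction a)
  case 0
  then show ?case by simp
next
  case (Suc a)
  have IH: "fact (N - a) * fact (N - s) \<le> c ^ a * fact (N - s - a) * (fact N :: real)"
    using Suc by simp
  have "N - a = Suc (N - Suc a)" "N - s - a = Suc (N - s - Suc a)"
    using Suc.prems assms(1) by arith+
  then have fact_Na: "(fact (N - a) :: real) = real (N - a) * fact (N - Suc a)"
    and fact_Nsa: "(fact (N - s - a) :: real) = real (N - s - a) * fact (N - s - Suc a)"
    by (metis fact_Suc of_nat_fact)+
  have pos: "0 < real (N - s - a)" using Suc.prems by simp
  have "real (N - s - a) \<le> c * real (N - a)"
  proof -
    have "c * real a \<le> real a" using assms(4,5) by (simp add: mult_left_le_one_le)
    then show ?thesis using Suc.prems assms(1,3) by (simp add: of_nat_diff algebra_simps)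
  qed
  then have "real (N - s - a) * (fact (N - Suc a) * fact (N - s))
               \<le> c * (real (N - a) * fact (N - Suc a) * fact (N - s))"
    by (simp add: mult.assoc mult_right_mono)
  also have "\<dots> \<le> c * (c ^ a * fact (N - s - a) * fact N)"
    using IH fact_Na assms(4) by (intro mult_left_mono) auto
  also have "\<dots> = real (N - s - a) * (c ^ Suc a * fact (N - s - Suc a) * fact N)"
    using fact_Nsa by (simp add: algebra_simps)
  finally show ?case by (rule mult_left_le_imp_le[OF _ pos])
qed

text \<open>Conditioning on the prefix p, which avoids S, raises the probability that all of S is
  ranked last by the factor c^(-length p), where c bounds the proportion of elements outside S.\<close>

lemma prefix_last_block_ratio:
  fixes c :: real
  assumes "finite U" "S \<subseteq> U" "distinct p" "set p \<subseteq> U - S"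
    and "real (card U - card S) \<le> c * real (card U)" "0 \<le> c" "c \<le> 1"
  defines "A \<equiv> {xs \<in> permutations_of_set U. take (length p) xs = p}"
  shows "real (card A) * real (card (last_block_permutations U S))
           \<le> c ^ length p * real (card (A \<inter> last_block_permutations U S)) * fact (card U)"
proof -
  define N s a where "N = card U" and "s = card S" and "a = length p"
  have "s \<le> N" unfolding s_def N_def using assms(1,2) by (rule card_mono)
  have "a = card (set p)" using assms(3) by (simp add: a_def distinct_card)
  also have "\<dots> \<le> card (U - S)" using assms(1,4) by (intro card_mono) auto
  finally have "a \<le> N - s"
    using assms(1,2) by (simp add: N_def s_def card_Diff_subset finite_subset)
  have "card A = fact (N - a)"
    using card_permutations_with_prefix[OF assms(1,3)] assms(4) by (auto simp: A_def N_def a_def)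
  moreover have "card (last_block_permutations U S) = fact (N - s) * fact s"
    using card_last_block_permutations[OF assms(1,2)] by (simp add: N_def s_def)
  ultimately have "real (card A) * real (card (last_block_permutations U S))
                     = fact (N - a) * fact (N - s) * fact s"
    by simp
  also have "\<dots> \<le> c ^ a * fact (N - s - a) * fact N * fact s"
    using fact_diff_mult_fact_diff_le[OF \<open>s \<le> N\<close> \<open>a \<le> N - s\<close> _ assms(6,7)] assms(5)
    by (intro mult_right_mono) (simp_all add: N_def s_def)
  also have "\<dots> = c ^ a * (fact (N - s - a) * fact s) * fact N" by simp
  also have "\<dots> \<le> c ^ a * real (card (A \<inter> last_block_permutations U S)) * fact N"
  proof -
    have "fact (N - s - a) * fact s \<le> card (A \<inter> last_block_permutations U S)"
      using card_prefix_last_block_ge[OF assms(1-4)] by (simp add: A_def N_def s_def a_def)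
    then have "(fact (N - s - a) * fact s :: real) \<le> real (card (A \<inter> last_block_permutations U S))"
      by (metis of_nat_fact of_nat_le_iff of_nat_mult)
    then show ?thesis using assms(6) by (intro mult_right_mono mult_left_mono) simp_all
  qed
  finally show ?thesis by (simp add: N_def a_def)
qed

lemma sum_card_Int_div_card_le:
  fixes E B :: "'a set" and C :: "'a \<Rightarrow> 'a set"
  assumes fin: "finite E" "finite B" "\<And>x. finite (C x)"
    and refl: "\<And>x. x \<in> E \<Longrightarrow> x \<in> C x"
    and closed: "\<And>x y. x \<in> E \<Longrightarrow> y \<in> C x \<Longrightarrow> C y = C x"
  shows "(\<Sum>x\<in>E. real (card (C x \<inter> B)) / real (card (C x))) \<le> real (card B)"
proof -
  let ?w = "\<lambda>x y. if y \<in> C x then 1 / real (card (C x)) else 0"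
  have "real (card (C x \<inter> B)) / real (card (C x)) = (\<Sum>y\<in>B. ?w x y)" for x
  proof -
    have "(\<Sum>y\<in>B. ?w x y) = (\<Sum>y\<in>B \<inter> C x. 1 / real (card (C x)))"
      using sum.inter_restrict[OF fin(2), of "\<lambda>_. 1 / real (card (C x))" "C x"] by simp
    then show ?thesis by (simp add: Int_commute)
  qed
  then have "(\<Sum>x\<in>E. real (card (C x \<inter> B)) / real (card (C x))) = (\<Sum>x\<in>E. \<Sum>y\<in>B. ?w x y)"
    by simp
  also have "\<dots> = (\<Sum>y\<in>B. \<Sum>x\<in>E. ?w x y)"
    by (rule sum.swap)
  also have "\<dots> \<le> (\<Sum>y\<in>B. 1)"
  proof (rule sum_mono)
    fix y assume "y \<in> B"
    have "?w x y \<le> (if x \<in> C y then 1 / real (card (C y)) else 0)" if "x \<in> E" for x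
    proof (cases "y \<in> C x")
      case True
      then have "C y = C x" by (rule closed[OF that])
      then show ?thesis using refl[OF that] by simp
    qed simp
    then have "(\<Sum>x\<in>E. ?w x y) \<le> (\<Sum>x\<in>E. if x \<in> C y then 1 / real (card (C y)) else 0)"
      by (rule sum_mono)
    also have "\<dots> = (\<Sum>x\<in>E \<inter> C y. 1 / real (card (C y)))"
      by (rule sum.inter_restrict[OF fin(1), symmetric])
    also have "\<dots> = real (card (E \<inter> C y)) / real (card (C y))"
      by simp
    also have "\<dots> \<le> 1"
      using card_mono[OF fin(3), of "E \<inter> C y" y] by (auto simp: divide_le_eq_1)
    finally show "(\<Sum>x\<in>E. ?w x y) \<le> 1" .
  qed
  finally show ?thesis by simp
qed

lemma card_le_by_conditioning:
  fixes E \<Omega> B :: "'a set" and C :: "'a \<Rightarrow> 'a set" and r :: real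
  assumes "finite \<Omega>" "E \<subseteq> \<Omega>" "finite B" "B \<noteq> {}" "0 \<le> r"
    and "\<And>x. finite (C x)" "\<And>x. x \<in> E \<Longrightarrow> x \<in> C x"
    and "\<And>x y. x \<in> E \<Longrightarrow> y \<in> C x \<Longrightarrow> C y = C x"
    and ratio: "\<And>x. x \<in> E \<Longrightarrow>
      real (card (C x)) * real (card B) \<le> r * real (card (C x \<inter> B)) * real (card \<Omega>)"
  shows "real (card E) \<le> r * real (card \<Omega>)"
proof -
  have "finite E" using assms(1,2) finite_subset by blast
  have "real (card E) * real (card B) = (\<Sum>x\<in>E. real (card B))" by simp
  also have "\<dots> \<le> (\<Sum>x\<in>E. r * real (card \<Omega>) * (real (card (C x \<inter> B)) / real (card (C x))))"
  proof (rule sum_mono)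
    fix x assume "x \<in> E"
    then have "0 < real (card (C x))"
      using assms(6,7) card_gt_0_iff by fastforce
    then have "real (card B) \<le> r * real (card (C x \<inter> B)) * real (card \<Omega>) / real (card (C x))"
      using ratio[OF \<open>x \<in> E\<close>] by (simp add: pos_le_divide_eq mult.commute)
    then show "real (card B) \<le> r * real (card \<Omega>) * (real (card (C x \<inter> B)) / real (card (C x)))"
      by (simp add: mult_ac)
  qed
  also have "\<dots> = r * real (card \<Omega>) * (\<Sum>x\<in>E. real (card (C x \<inter> B)) / real (card (C x)))"
    by (simp add: sum_distrib_left)
  also have "\<dots> \<le> r * real (card \<Omega>) * real (card B)"
    using sum_card_Int_div_card_le[OF \<open>finite E\<close> assms(3,6-8)] assms(5)
    by (intro mult_left_mono) auto
  finally have "real (card E) * real (card B) \<le> r * real (card \<Omega>) * real (card B)" .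
  moreover have "0 < real (card B)" using assms(3,4) by (simp add: card_gt_0_iff)
  ultimately show ?thesis by simp
qed

definition priority_profiles :: "nat \<Rightarrow> nat \<Rightarrow> (nat \<Rightarrow> nat list) set" where
  "priority_profiles n q = PiE {..<n} (\<lambda>_. permutations_of_set {..<n*q})"

lemma profiles_eq: "profiles n q = PiE {..<n*q} (\<lambda>_. permutations_of_set {..<n}) \<times> priority_profiles n q"
  by (simp add: profiles_def priority_profiles_def)

lemma snd_in_priority_profiles: "P \<in> profiles n q \<Longrightarrow> snd P \<in> priority_profiles n q"
  by (simp add: profiles_eq mem_Times_iff)

lemma finite_profiles: "finite (profiles n q)"
  by (simp add: profiles_def finite_PiE)

lemma card_profiles: "card (profiles n q) = fact n ^ (n*q) * card (priority_profiles n q)"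
  by (simp add: profiles_eq card_cartesian_product card_PiE)

definition cylinder :: "nat \<Rightarrow> nat \<Rightarrow> profile \<Rightarrow> profile set" where
  "cylinder n q P = {P' \<in> profiles n q. snd P' = snd P \<and>
      (\<forall>i<n*q. take (examined n q P i) (fst P' i) = take (examined n q P i) (fst P i))}"

definition prefix_extensions :: "nat \<Rightarrow> nat \<Rightarrow> profile \<Rightarrow> nat \<Rightarrow> nat list set" where
  "prefix_extensions n q P i =
     {xs \<in> permutations_of_set {..<n}. take (examined n q P i) xs = take (examined n q P i) (fst P i)}"

lemma cylinder_refl: "P \<in> profiles n q \<Longrightarrow> P \<in> cylinder n q P"
  by (simp add: cylinder_def)

lemma cylinder_subset: "cylinder n q P \<subseteq> profiles n q"
  by (auto simp: cylinder_def)

lemma finite_cylinder: "finite (cylinder n q P)"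
  using cylinder_subset finite_profiles by (rule finite_subset)

lemma cylinder_eq_cylinder:
  assumes "P' \<in> cylinder n q P"
  shows "cylinder n q P' = cylinder n q P"
proof -
  have P': "snd P' = snd P"
    "\<forall>i<n*q. take (examined n q P i) (fst P' i) = take (examined n q P i) (fst P i)"
    using assms by (auto simp: cylinder_def)
  then have "examined n q P' = examined n q P" by (rule examined_eq_if_prefixes_agree)
  then show ?thesis using P' by (auto simp: cylinder_def)
qed

lemma cylinder_eq_image_PiE:
  assumes "P \<in> profiles n q"
  shows "cylinder n q P = (\<lambda>f. (f, snd P)) ` PiE {..<n*q} (prefix_extensions n q P)"
proof (intro equalityI subsetI)
  fix P' assume "P' \<in> cylinder n q P"
  then have P': "P' \<in> profiles n q" "snd P' = snd P"
    "\<forall>i<n*q. take (examined n q P i) (fst P' i) = take (examined n q P i) (fst P i)"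
    unfolding cylinder_def by blast+
  have "fst P' \<in> PiE {..<n*q} (\<lambda>_. permutations_of_set {..<n})"
    using P'(1) by (simp add: profiles_eq mem_Times_iff)
  then have "fst P' \<in> PiE {..<n*q} (prefix_extensions n q P)"
    using P'(3) unfolding prefix_extensions_def PiE_iff by blast
  moreover have "P' = (fst P', snd P)" using P'(2) by (metis prod.collapse)
  ultimately show "P' \<in> (\<lambda>f. (f, snd P)) ` PiE {..<n*q} (prefix_extensions n q P)" by blast
next
  fix P' assume "P' \<in> (\<lambda>f. (f, snd P)) ` PiE {..<n*q} (prefix_extensions n q P)"
  then obtain f where f: "P' = (f, snd P)" "f \<in> PiE {..<n*q} (prefix_extensions n q P)" by blast
  then have "f \<in> PiE {..<n*q} (\<lambda>_. permutations_of_set {..<n})"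
    unfolding prefix_extensions_def PiE_iff by blast
  then have "P' \<in> profiles n q"
    using f(1) snd_in_priority_profiles[OF assms] by (simp add: profiles_eq)
  then show "P' \<in> cylinder n q P"
    using f unfolding cylinder_def prefix_extensions_def PiE_iff by simp
qed

definition S_last_prefs :: "nat \<Rightarrow> nat set \<Rightarrow> nat set \<Rightarrow> nat \<Rightarrow> nat list set" where
  "S_last_prefs n I0 S i =
     (if i \<in> I0 then last_block_permutations {..<n} S else permutations_of_set {..<n})"

definition S_last_profiles :: "nat \<Rightarrow> nat \<Rightarrow> nat set \<Rightarrow> nat set \<Rightarrow> profile set" where
  "S_last_profiles n q I0 S = PiE {..<n*q} (S_last_prefs n I0 S) \<times> priority_profiles n q"

lemma card_S_last_profiles:
  "card (S_last_profiles n q I0 S) = (\<Prod>i<n*q. card (S_last_prefs n I0 S i)) * card (priority_profiles n q)"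
  by (simp add: S_last_profiles_def card_cartesian_product card_PiE)

lemma finite_S_last_profiles: "finite (S_last_profiles n q I0 S)"
  by (simp add: S_last_profiles_def S_last_prefs_def priority_profiles_def
      last_block_permutations_def finite_PiE)

lemma S_last_profiles_nonempty:
  "S \<subseteq> {..<n} \<Longrightarrow> S_last_profiles n q I0 S \<noteq> {}"
  by (auto simp: S_last_profiles_def S_last_prefs_def priority_profiles_def
      last_block_permutations_def PiE_eq_empty_iff finite_subset)

lemma cylinder_Int_S_last_profiles:
  assumes "P \<in> profiles n q" "S \<subseteq> {..<n}"
  shows "cylinder n q P \<inter> S_last_profiles n q I0 S
           = (\<lambda>f. (f, snd P)) ` PiE {..<n*q} (\<lambda>i. prefix_extensions n q P i \<inter> S_last_prefs n I0 S i)"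
proof -
  have "snd P \<in> priority_profiles n q" using assms(1) by (rule snd_in_priority_profiles)
  then have "(\<lambda>f. (f, snd P)) ` A \<inter> (B \<times> priority_profiles n q) = (\<lambda>f. (f, snd P)) ` (A \<inter> B)"
    for A B :: "(nat \<Rightarrow> nat list) set"
    by blast
  then show ?thesis
    by (simp add: cylinder_eq_image_PiE[OF assms(1)] S_last_profiles_def PiE_Int)
qed

lemma inj_on_pair_const: "inj_on (\<lambda>f. (f, c)) A"
  by (auto simp: inj_on_def)

lemma card_cylinder:
  "P \<in> profiles n q \<Longrightarrow> card (cylinder n q P) = (\<Prod>i<n*q. card (prefix_extensions n q P i))"
  by (simp add: cylinder_eq_image_PiE card_image[OF inj_on_pair_const] card_PiE)

lemma card_cylinder_Int_S_last_profiles: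
  "P \<in> profiles n q \<Longrightarrow> S \<subseteq> {..<n} \<Longrightarrow> card (cylinder n q P \<inter> S_last_profiles n q I0 S)
     = (\<Prod>i<n*q. card (prefix_extensions n q P i \<inter> S_last_prefs n I0 S i))"
  by (simp add: cylinder_Int_S_last_profiles card_image[OF inj_on_pair_const] card_PiE)

lemma prefix_extensions_S_last_ratio:
  fixes \<epsilon> :: real
  assumes P: "P \<in> profiles n q" and i: "i < n*q" and S: "S \<subseteq> {..<n}"
    and "0 \<le> \<epsilon>" "\<epsilon> \<le> 1" "\<epsilon> * real n \<le> real (card S)"
    and avoid: "i \<in> I0 \<Longrightarrow> applied n q P i \<inter> S = {}"
  shows "real (card (prefix_extensions n q P i)) * real (card (S_last_prefs n I0 S i))
           \<le> (if i \<in> I0 then (1 - \<epsilon>) ^ examined n q P i else 1)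
              * real (card (prefix_extensions n q P i \<inter> S_last_prefs n I0 S i)) * fact n"
proof (cases "i \<in> I0")
  case False
  have "prefix_extensions n q P i \<subseteq> permutations_of_set {..<n}"
    by (auto simp: prefix_extensions_def)
  then show ?thesis using False by (simp add: S_last_prefs_def Int_absorb2)
next
  case True
  define p where "p = take (examined n q P i) (fst P i)"
  have pref: "distinct (fst P i)" "length (fst P i) = n"
    using pref_in_permutations[OF P i] by (auto dest: permutations_of_setD length_finite_permutations_of_set)
  have "length p = examined n q P i"
    using pref(2) examined_le[of n q P i] by (simp add: p_def)
  moreover have "set p \<subseteq> {..<n} - S"
    using avoid[OF True] applied_eq_set_take[OF P i] pref_in_permutations[OF P i]
    by (auto simp: p_def permutations_of_set_def dest: in_set_takeD)
  moreover have "real (card {..<n} - card S) \<le> (1 - \<epsilon>) * real (card {..<n})"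
    using assms(6) card_mono[OF _ S] by (simp add: of_nat_diff algebra_simps)
  ultimately show ?thesis
    using prefix_last_block_ratio[of "{..<n}" S p "1 - \<epsilon>"] True S pref(1) assms(4,5)
    by (simp add: prefix_extensions_def S_last_prefs_def p_def)
qed

lemma cylinder_S_last_ratio:
  fixes \<epsilon> :: real
  assumes P: "P \<in> profiles n q" and I0: "I0 \<subseteq> {..<n*q}" and S: "S \<subseteq> {..<n}"
    and \<epsilon>: "0 \<le> \<epsilon>" "\<epsilon> \<le> 1" "\<epsilon> * real n \<le> real (card S)"
    and avoid: "\<forall>i\<in>I0. applied n q P i \<inter> S = {}"
  shows "real (card (cylinder n q P)) * real (card (S_last_profiles n q I0 S))
           \<le> (1 - \<epsilon>) ^ (\<Sum>i\<in>I0. examined n q P i)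
              * real (card (cylinder n q P \<inter> S_last_profiles n q I0 S)) * real (card (profiles n q))"
proof -
  define c where "c i = (if i \<in> I0 then (1 - \<epsilon>) ^ examined n q P i else 1)" for i
  define Ext where "Ext = prefix_extensions n q P"
  define D where "D = S_last_prefs n I0 S"
  have "(\<Prod>i<n*q. c i) = (\<Prod>i\<in>I0. (1 - \<epsilon>) ^ examined n q P i)"
    using I0 by (simp add: c_def prod.If_cases Int_absorb1)
  then have prod_c: "(\<Prod>i<n*q. c i) = (1 - \<epsilon>) ^ (\<Sum>i\<in>I0. examined n q P i)"
    by (simp add: power_sum)
  have "real (card (cylinder n q P)) * real (card (S_last_profiles n q I0 S))
          = (\<Prod>i<n*q. real (card (Ext i)) * real (card (D i))) * real (card (priority_profiles n q))"
    by (simp add: card_cylinder[OF P] card_S_last_profiles prod.distrib Ext_def D_def)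
  also have "\<dots> \<le> (\<Prod>i<n*q. c i * real (card (Ext i \<inter> D i)) * fact n)
                    * real (card (priority_profiles n q))"
    using prefix_extensions_S_last_ratio[OF P _ S \<epsilon>] avoid
    by (intro mult_right_mono prod_mono) (auto simp: c_def Ext_def D_def)
  also have "\<dots> = (\<Prod>i<n*q. c i) * real (card (cylinder n q P \<inter> S_last_profiles n q I0 S))
                    * real (card (profiles n q))"
    by (simp add: card_cylinder_Int_S_last_profiles[OF P S] card_profiles prod.distrib
        Ext_def D_def)
  finally show ?thesis by (simp only: prod_c)
qed


lemma cylinder_S_last_ratio_powr:
  fixes \<epsilon> x :: real
  assumes P: "P \<in> profiles n q" and I0: "I0 \<subseteq> {..<n*q}" and S: "S \<subseteq> {..<n}"
    and \<epsilon>: "0 < \<epsilon>" "\<epsilon> < 1" "\<epsilon> * real n \<le> real (card S)"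
    and many: "x \<le> (\<Sum>i\<in>I0. real (num_applications n q P i))"
    and avoid: "\<forall>i\<in>I0. applied n q P i \<inter> S = {}"
  shows "real (card (cylinder n q P)) * real (card (S_last_profiles n q I0 S))
           \<le> (1 - \<epsilon>) powr x
              * real (card (cylinder n q P \<inter> S_last_profiles n q I0 S)) * real (card (profiles n q))"
proof -
  have "(\<Sum>i\<in>I0. real (num_applications n q P i)) = (\<Sum>i\<in>I0. real (examined n q P i))"
    using num_applications_eq_examined[OF P] I0 by (intro sum.cong) auto
  then have pow: "(1 - \<epsilon>) ^ (\<Sum>i\<in>I0. examined n q P i) \<le> (1 - \<epsilon>) powr x"
    using many \<epsilon>(1,2) by (simp add: powr_realpow[symmetric] powr_mono')
  have "real (card (cylinder n q P)) * real (card (S_last_profiles n q I0 S))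
          \<le> (1 - \<epsilon>) ^ (\<Sum>i\<in>I0. examined n q P i)
             * real (card (cylinder n q P \<inter> S_last_profiles n q I0 S)) * real (card (profiles n q))"
    using \<epsilon> by (intro cylinder_S_last_ratio[OF P I0 S _ _ _ avoid]) simp_all
  also have "\<dots> \<le> (1 - \<epsilon>) powr x
             * real (card (cylinder n q P \<inter> S_last_profiles n q I0 S)) * real (card (profiles n q))"
    using pow by (intro mult_right_mono) simp_all
  finally show ?thesis .
qed

theorem mainTheorem13:
  fixes q n :: nat and \<epsilon> :: real and I0 S1 :: "nat set"
  assumes "q > 0" and "0 < \<epsilon>" and "\<epsilon> < 1"
    and "I0 \<subseteq> {..<n*q}" and "real (card I0) \<ge> \<epsilon> * real (n*q)"
    and "S1 \<subseteq> {..<n}" and "real (card S1) \<ge> \<epsilon> * real n"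
  shows "measure_pmf.prob (random_problem n q)
           {P. (\<Sum>i\<in>I0. real (num_applications n q P i)) \<ge> real n * sqrt (ln (real n))
               \<and> (\<forall>i\<in>I0. applied n q P i \<inter> S1 = {})}
         \<le> (1 - \<epsilon>) powr (real n * sqrt (ln (real n)))"
proof -
  define x where "x = real n * sqrt (ln (real n))"
  define Ev where "Ev = {P. (\<Sum>i\<in>I0. real (num_applications n q P i)) \<ge> x
                             \<and> (\<forall>i\<in>I0. applied n q P i \<inter> S1 = {})}"
  have "real (card (profiles n q \<inter> Ev)) \<le> (1 - \<epsilon>) powr x * real (card (profiles n q))"
    by (rule card_le_by_conditioning[where C = "cylinder n q" and B = "S_last_profiles n q I0 S1"])
       (use assms(2-4,6,7) in \<open>auto simp: Ev_def finite_profiles finite_cylinder cylinder_refl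
          cylinder_eq_cylinder finite_S_last_profiles S_last_profiles_nonempty
          cylinder_S_last_ratio_powr\<close>)
  moreover have "profiles n q \<noteq> {}"
    by (simp add: profiles_def PiE_eq_empty_iff)
  ultimately show ?thesis
    using finite_profiles
    by (simp add: random_problem_def measure_pmf_of_set Ev_def x_def card_gt_0_iff divide_le_eq)
qed

end
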